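(* Let $X$ be a shift space and $k\ge1$. The $k$-th higher block shift space $X^{(k)}$ is eventually dendric if and only if $X$ is eventually dendric.
   Context: $A$ is a finite alphabet; a shift space is a closed shift-invariant subset $X\subseteq A^{\mathbb Z}$ with language $\mathcal L(X)$ (finite factors), $\mathcal L_k(X)=\mathcal L(X)\cap A^k$. Given a bijection $f:\mathcal L_k(X)\to A_k$ onto a new alphabet $A_k$, the $k$-th higher block code $\gamma_k:X\to A_k^{\mathbb Z}$ is defined by $\gamma_k(x)_n=f(x_n\cdots x_{n+k-1})$ for all $n\in\mathbb Z$, and $X^{(k)}=\gamma_k(X)$ is the $k$-th higher block shift space. For a shift space $Y$ over alphabet $B$ and $w\in\mathcal L(Y)$, the extension graph $\mathcal E_1(w)$ is the undirected bipartite graph with vertex set the disjoint union of $\{a\in B: aw\in\mathcal L(Y)\}$ and $\{b\in B: wb\in\mathcal L(Y)\}$ and an edge $(a,b)$ iff $awb\in\mathcal L(Y)$. $Y$ is eventually dendric if for some $m\ge0$, $\mathcal E_1(w)$ is a tree for every $w\in\mathcal L(Y)$ of length $\ge m$. *)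

theory Defs
  imports "HOL-Analysis.Analysis"
begin

definition shift :: "(int \<Rightarrow> 'a) \<Rightarrow> (int \<Rightarrow> 'a)" where
  "shift x = (\<lambda>n. x (n + 1))"

definition shift_space :: "'a set \<Rightarrow> (int \<Rightarrow> 'a) set \<Rightarrow> bool" where
  "shift_space A X \<longleftrightarrow> finite A \<and>
     X \<subseteq> topspace (product_topology (\<lambda>_::int. discrete_topology A) UNIV) \<and>
     closedin (product_topology (\<lambda>_::int. discrete_topology A) UNIV) X \<and>
     shift ` X = X"

definition factor :: "(int \<Rightarrow> 'a) \<Rightarrow> int \<Rightarrow> nat \<Rightarrow> 'a list" where
  "factor x n m = map (\<lambda>i. x (n + int i)) [0..<m]"

definition lang :: "(int \<Rightarrow> 'a) set \<Rightarrow> 'a list set" where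
  "lang X = {w. \<exists>x\<in>X. \<exists>n. w = factor x n (length w)}"

definition lang_k :: "(int \<Rightarrow> 'a) set \<Rightarrow> nat \<Rightarrow> 'a list set" where
  "lang_k X k = {w \<in> lang X. length w = k}"

definition higher_block_code :: "nat \<Rightarrow> ('a list \<Rightarrow> 'b) \<Rightarrow> (int \<Rightarrow> 'a) \<Rightarrow> (int \<Rightarrow> 'b)" where
  "higher_block_code k f x = (\<lambda>n. f (factor x n k))"

text \<open>Extension graph E_1(w): bipartite graph, left vertices Inl a (aw \<in> L),
right vertices Inr b (wb \<in> L), edge between Inl a and Inr b iff awb \<in> L.\<close>
definition ext_vertices :: "'a list set \<Rightarrow> 'a list \<Rightarrow> ('a + 'a) set" where
  "ext_vertices L w = Inl ` {a. a # w \<in> L} \<union> Inr ` {b. w @ [b] \<in> L}"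

definition ext_adj :: "'a list set \<Rightarrow> 'a list \<Rightarrow> ('a + 'a) \<Rightarrow> ('a + 'a) \<Rightarrow> bool" where
  "ext_adj L w u v \<longleftrightarrow>
     (\<exists>a b. ((u = Inl a \<and> v = Inr b) \<or> (u = Inr b \<and> v = Inl a)) \<and> a # w @ [b] \<in> L)"

definition graph_connected :: "'v set \<Rightarrow> ('v \<Rightarrow> 'v \<Rightarrow> bool) \<Rightarrow> bool" where
  "graph_connected V E \<longleftrightarrow> (\<forall>u\<in>V. \<forall>v\<in>V. (\<lambda>x y. x \<in> V \<and> y \<in> V \<and> E x y)\<^sup>*\<^sup>* u v)"

definition graph_has_cycle :: "'v set \<Rightarrow> ('v \<Rightarrow> 'v \<Rightarrow> bool) \<Rightarrow> bool" where
  "graph_has_cycle V E \<longleftrightarrow> (\<exists>cs. length cs \<ge> 3 \<and> distinct cs \<and> set cs \<subseteq> V \<and>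
      (\<forall>i. Suc i < length cs \<longrightarrow> E (cs ! i) (cs ! Suc i)) \<and> E (last cs) (hd cs))"

definition graph_tree :: "'v set \<Rightarrow> ('v \<Rightarrow> 'v \<Rightarrow> bool) \<Rightarrow> bool" where
  "graph_tree V E \<longleftrightarrow> V \<noteq> {} \<and> graph_connected V E \<and> \<not> graph_has_cycle V E"

definition ext_graph_is_tree :: "(int \<Rightarrow> 'a) set \<Rightarrow> 'a list \<Rightarrow> bool" where
  "ext_graph_is_tree Y w = graph_tree (ext_vertices (lang Y) w) (ext_adj (lang Y) w)"

definition eventually_dendric :: "(int \<Rightarrow> 'a) set \<Rightarrow> bool" where
  "eventually_dendric Y \<longleftrightarrow>
     (\<exists>m::nat. \<forall>w \<in> lang Y. length w \<ge> m \<longrightarrow> ext_graph_is_tree Y w)"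

end

theory Submission
  imports Defs
begin

text \<open>Extended to words, the higher block code sends each word v of L(X) with |v| >= k
injectively to a word of length |v| - k + 1 of L(X^(k)), and every nonempty word of L(X^(k))
arises this way. If p and s are the first and the last k - 1 letters of v, then a extends v
on the left iff f(ap) extends its image on the left, and b extends v on the right iff f(sb)
extends it on the right; as f is injective on k-blocks, a \<mapsto> f(ap), b \<mapsto> f(sb)
is an isomorphism between the two extension graphs. So the thresholds from which on all
extension graphs are trees differ by at most k.\<close>

lemma ex_length_Suc_0_iff: "(\<exists>xs. length xs = Suc 0 \<and> P xs) \<longleftrightarrow> (\<exists>x. P [x])"
  by (auto simp: length_Suc_conv)

lemma length_factor [simp]: "length (factor x n m) = m"
  by (simp add: factor_def)

lemma nth_factor [simp]: "i < m \<Longrightarrow> factor x n m ! i = x (n + int i)"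
  by (simp add: factor_def)

lemma take_drop_factor: "i + j \<le> m \<Longrightarrow> take j (drop i (factor x n m)) = factor x (n + int i) j"
  by (rule nth_equalityI) (simp_all add: add.assoc)

lemma take_drop_mem_lang:
  assumes "v \<in> lang X" "i + j \<le> length v"
  shows "take j (drop i v) \<in> lang X"
proof -
  from assms(1) obtain x n where "x \<in> X" and v: "v = factor x n (length v)"
    unfolding lang_def by blast
  have "take j (drop i (factor x n (length v))) = factor x (n + int i) j"
    using assms(2) by (rule take_drop_factor)
  with \<open>x \<in> X\<close> show ?thesis
    unfolding lang_def v[symmetric] by auto
qed

lemma Cons_mem_langD: "a # v \<in> lang X \<Longrightarrow> v \<in> lang X"
  using take_drop_mem_lang[of "a # v" X 1 "length v"] by simp

lemma snoc_mem_langD: "v @ [b] \<in> lang X \<Longrightarrow> v \<in> lang X"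
  using take_drop_mem_lang[of "v @ [b]" X 0 "length v"] by simp

lemma take_mem_lang_k: "w \<in> lang X \<Longrightarrow> k \<le> length w \<Longrightarrow> take k w \<in> lang_k X k"
  using take_drop_mem_lang[of w X 0 k] by (simp add: lang_k_def)

lemma drop_mem_lang_k:
  "w \<in> lang X \<Longrightarrow> k \<le> length w \<Longrightarrow> drop (length w - k) w \<in> lang_k X k"
  using take_drop_mem_lang[of w X "length w - k" k] by (simp add: lang_k_def)

definition block_code :: "nat \<Rightarrow> ('a list \<Rightarrow> 'b) \<Rightarrow> 'a list \<Rightarrow> 'b list" where
  "block_code k f v = map (\<lambda>i. f (take k (drop i v))) [0..<length v + 1 - k]"

lemma length_block_code [simp]: "length (block_code k f v) = length v + 1 - k"
  by (simp add: block_code_def)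

lemma nth_block_code [simp]:
  "i < length v + 1 - k \<Longrightarrow> block_code k f v ! i = f (take k (drop i v))"
  by (simp add: block_code_def)

lemma block_code_take_drop:
  assumes "i + n \<le> length w"
  shows "block_code k f (take n (drop i w)) = take (n + 1 - k) (drop i (block_code k f w))"
proof (rule nth_equalityI)
  fix j assume "j < length (block_code k f (take n (drop i w)))"
  then have "j < length (take n (drop i w)) + 1 - k" "j + k \<le> n" "i + j < length w + 1 - k"
    using assms by auto
  then show "block_code k f (take n (drop i w)) ! j = take (n + 1 - k) (drop i (block_code k f w)) ! j"
    by (simp add: drop_take take_take min_def add.commute)
qed (use assms in simp)

lemma block_code_Cons:
  assumes "k \<le> length (a # v)"
  shows "block_code k f (a # v) = f (take k (a # v)) # block_code k f v"
proof -
  have "length (a # v) + 1 - k = Suc (length v + 1 - k)" using assms by simp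
  then show ?thesis by (simp add: block_code_def map_upt_Suc del: upt_Suc)
qed

lemma block_code_snoc:
  assumes "k \<le> length (v @ [b])"
  shows "block_code k f (v @ [b]) = block_code k f v @ [f (drop (length v + 1 - k) (v @ [b]))]"
proof (rule nth_equalityI)
  fix i assume "i < length (block_code k f (v @ [b]))"
  then consider "i < length v + 1 - k" | "i = length v + 1 - k" using assms by fastforce
  then show "block_code k f (v @ [b]) ! i
      = (block_code k f v @ [f (drop (length v + 1 - k) (v @ [b]))]) ! i"
    by cases (use assms in \<open>auto simp: nth_append\<close>)
qed (use assms in simp)

lemma block_code_Cons_snoc:
  assumes "k \<le> length (a # v)"
  shows "block_code k f (a # v @ [b])
    = f (take k (a # v)) # block_code k f v @ [f (drop (length v + 1 - k) (v @ [b]))]"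
  using assms by (simp add: block_code_Cons block_code_snoc take_Cons')

lemma factor_higher_block_code:
  assumes "k \<ge> 1"
  shows "factor (higher_block_code k f x) n m = block_code k f (factor x n (m + k - 1))"
  using assms by (intro nth_equalityI)
    (simp_all add: higher_block_code_def take_drop_factor)

lemma lang_higher_block_code_iff:
  assumes "k \<ge> 1"
  shows "u \<in> lang (higher_block_code k f ` X) \<longleftrightarrow>
    (\<exists>v \<in> lang X. length v = length u + k - 1 \<and> u = block_code k f v)"
proof
  assume "u \<in> lang (higher_block_code k f ` X)"
  then obtain x n where "x \<in> X" and u: "u = factor (higher_block_code k f x) n (length u)"
    unfolding lang_def by blast
  show "\<exists>v \<in> lang X. length v = length u + k - 1 \<and> u = block_code k f v"
  proof (intro bexI conjI)
    show "u = block_code k f (factor x n (length u + k - 1))"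
      using u factor_higher_block_code[OF assms] by (rule trans)
  qed (use \<open>x \<in> X\<close> in \<open>auto simp: lang_def\<close>)
next
  assume "\<exists>v \<in> lang X. length v = length u + k - 1 \<and> u = block_code k f v"
  then obtain v where v: "v \<in> lang X" "length v = length u + k - 1" "u = block_code k f v"
    by blast
  then obtain x n where "x \<in> X" and vx: "v = factor x n (length v)"
    unfolding lang_def by blast
  have u: "u = block_code k f (factor x n (length u + k - 1))"
    using v(3) vx unfolding v(2) by simp
  have "u = factor (higher_block_code k f x) n (length u)"
    using u factor_higher_block_code[OF assms, symmetric] by (rule trans)
  with \<open>x \<in> X\<close> show "u \<in> lang (higher_block_code k f ` X)"
    unfolding lang_def by blast
qed

lemma block_code_inj:
  assumes inj: "inj_on f (lang_k X k)" and "k \<ge> 1"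
    and v: "v \<in> lang X" "k \<le> length v" and v': "v' \<in> lang X" "length v = length v'"
    and code: "block_code k f v = block_code k f v'"
  shows "v = v'"
proof (rule nth_equalityI)
  fix i assume "i < length v"
  \<comment> \<open>position i is covered by the k-block starting at j\<close>
  define j where "j = min i (length v - k)"
  have "j + k \<le> length v" "j \<le> i" "i - j < k"
    using \<open>i < length v\<close> \<open>k \<ge> 1\<close> v(2) by (auto simp: j_def)
  then have "take k (drop j v) \<in> lang_k X k" "take k (drop j v') \<in> lang_k X k"
    using take_drop_mem_lang[OF v(1)] take_drop_mem_lang[OF v'(1)] v'(2)
    by (auto simp: lang_k_def)
  moreover have "f (take k (drop j v)) = f (take k (drop j v'))"
    using arg_cong[OF code, of "\<lambda>w. w ! j"] \<open>j + k \<le> length v\<close> v'(2) by simp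
  ultimately have "take k (drop j v) = take k (drop j v')"
    using inj by (auto dest: inj_onD)
  then have "take k (drop j v) ! (i - j) = take k (drop j v') ! (i - j)" by simp
  then show "v ! i = v' ! i"
    using \<open>i - j < k\<close> \<open>j \<le> i\<close> \<open>i < length v\<close> v'(2) by simp
qed (rule v'(2))

definition graph_iso ::
    "('v \<Rightarrow> 'w) \<Rightarrow> 'v set \<Rightarrow> 'w set \<Rightarrow> ('v \<Rightarrow> 'v \<Rightarrow> bool) \<Rightarrow> ('w \<Rightarrow> 'w \<Rightarrow> bool) \<Rightarrow> bool" where
  "graph_iso g V W E F \<longleftrightarrow> bij_betw g V W \<and> (\<forall>x \<in> V. \<forall>y \<in> V. F (g x) (g y) \<longleftrightarrow> E x y)"

lemma graph_iso_inv_into: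
  assumes "graph_iso g V W E F"
  shows "graph_iso (inv_into V g) W V F E"
proof -
  have bij: "bij_betw g V W" and adj: "\<forall>x \<in> V. \<forall>y \<in> V. F (g x) (g y) \<longleftrightarrow> E x y"
    using assms by (auto simp: graph_iso_def)
  have "E (inv_into V g x) (inv_into V g y) \<longleftrightarrow> F x y" if "x \<in> W" "y \<in> W" for x y
    using adj bij_betw_inv_into_right[OF bij] bij_betw_apply[OF bij_betw_inv_into[OF bij]] that
    by metis
  then show ?thesis
    using bij_betw_inv_into[OF bij] by (simp add: graph_iso_def)
qed

lemma graph_iso_rtranclp:
  assumes "graph_iso g V W E F" "u \<in> V"
    and "(\<lambda>x y. x \<in> V \<and> y \<in> V \<and> E x y)\<^sup>*\<^sup>* u u'"
  shows "(\<lambda>x y. x \<in> W \<and> y \<in> W \<and> F x y)\<^sup>*\<^sup>* (g u) (g u')"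
  using assms(3)
proof (induction rule: rtranclp_induct)
  case (step y z)
  with assms(1) have "g y \<in> W" "g z \<in> W" "F (g y) (g z)"
    by (auto simp: graph_iso_def bij_betw_def)
  with step.IH show ?case
    by (simp add: rtranclp.rtrancl_into_rtrancl)
qed simp

lemma graph_iso_connected:
  assumes "graph_iso g V W E F" "graph_connected V E"
  shows "graph_connected W F"
  unfolding graph_connected_def
proof (intro ballI)
  fix u u' assume "u \<in> W" "u' \<in> W"
  with assms(1) obtain u0 u0' where "u0 \<in> V" "u0' \<in> V" "u = g u0" "u' = g u0'"
    by (auto simp: graph_iso_def bij_betw_def)
  with assms show "(\<lambda>x y. x \<in> W \<and> y \<in> W \<and> F x y)\<^sup>*\<^sup>* u u'"
    using graph_iso_rtranclp by (fastforce simp: graph_connected_def)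
qed

lemma graph_iso_has_cycle:
  assumes "graph_iso g V W E F" "graph_has_cycle V E"
  shows "graph_has_cycle W F"
proof -
  obtain cs where cs: "length cs \<ge> 3" "distinct cs" "set cs \<subseteq> V"
    "\<forall>i. Suc i < length cs \<longrightarrow> E (cs ! i) (cs ! Suc i)" "E (last cs) (hd cs)"
    using assms(2) unfolding graph_has_cycle_def by blast
  have inj: "inj_on g V" and img: "g ` V = W" and adj: "\<forall>x \<in> V. \<forall>y \<in> V. F (g x) (g y) \<longleftrightarrow> E x y"
    using assms(1) by (auto simp: graph_iso_def bij_betw_def)
  have "cs \<noteq> []" using cs(1) by auto
  then have "last cs \<in> V" "hd cs \<in> V" using cs(3) by auto
  moreover have "cs ! i \<in> V" "cs ! Suc i \<in> V" if "Suc i < length cs" for i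
    using that cs(3) nth_mem by (metis Suc_lessD subsetD)+
  moreover have "g ` set cs \<subseteq> W"
    using cs(3) img by blast
  ultimately show ?thesis
    unfolding graph_has_cycle_def
    using cs inj img adj \<open>cs \<noteq> []\<close>
    by (intro exI[of _ "map g cs"]) (simp add: distinct_map inj_on_subset last_map hd_map)
qed

lemma graph_iso_tree_iff:
  assumes "graph_iso g V W E F"
  shows "graph_tree V E \<longleftrightarrow> graph_tree W F"
proof -
  have inv: "graph_iso (inv_into V g) W V F E"
    using assms by (rule graph_iso_inv_into)
  have "V = {} \<longleftrightarrow> W = {}"
    using assms by (auto simp: graph_iso_def bij_betw_def)
  then show ?thesis
    unfolding graph_tree_def
    using graph_iso_connected[OF assms] graph_iso_connected[OF inv]
      graph_iso_has_cycle[OF assms] graph_iso_has_cycle[OF inv]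
    by blast
qed

lemma bij_betw_map_sum:
  assumes "bij_betw g A C" "bij_betw h B D"
  shows "bij_betw (map_sum g h) (A <+> B) (C <+> D)"
proof (rule bij_betw_imageI)
  have "inj_on g A" "inj_on h B"
    using assms by (simp_all add: bij_betw_def)
  then show "inj_on (map_sum g h) (A <+> B)"
    by (auto intro!: inj_onI dest: inj_onD)
  have "map_sum g h ` Inl ` A = Inl ` g ` A" "map_sum g h ` Inr ` B = Inr ` h ` B"
    by (simp_all add: image_image)
  with assms show "map_sum g h ` (A <+> B) = C <+> D"
    by (simp add: bij_betw_def Plus_def image_Un)
qed

lemma ext_vertices_Plus: "ext_vertices L w = {a. a # w \<in> L} <+> {b. w @ [b] \<in> L}"
  by (simp add: ext_vertices_def Plus_def)

lemma ext_adj_simps [simp]: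
  "ext_adj L w (Inl a) (Inr b) \<longleftrightarrow> a # w @ [b] \<in> L"
  "ext_adj L w (Inr b) (Inl a) \<longleftrightarrow> a # w @ [b] \<in> L"
  "\<not> ext_adj L w (Inl a) (Inl a')"
  "\<not> ext_adj L w (Inr b) (Inr b')"
  by (auto simp: ext_adj_def)

locale block_coding =
  fixes X :: "(int \<Rightarrow> 'a) set" and k :: nat and f :: "'a list \<Rightarrow> 'b"
  assumes k_pos: "k \<ge> 1" and inj_f: "inj_on f (lang_k X k)"
begin

abbreviation Y :: "(int \<Rightarrow> 'b) set" where
  "Y \<equiv> higher_block_code k f ` X"

lemma infix_mem_lang_image_iff:
  assumes v: "v \<in> lang X" "k \<le> length v"
  shows "x @ block_code k f v @ y \<in> lang Y \<longleftrightarrow>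
    (\<exists>x' y'. length x' = length x \<and> length y' = length y \<and> x' @ v @ y' \<in> lang X \<and>
       block_code k f (x' @ v @ y') = x @ block_code k f v @ y)"
proof
  assume "x @ block_code k f v @ y \<in> lang Y"
  then obtain w where "w \<in> lang X" and len_w: "length w = length x + length v + length y"
    and code_w: "block_code k f w = x @ block_code k f v @ y"
    using v(2) k_pos by (auto simp: lang_higher_block_code_iff[OF k_pos])
  define v' where "v' = take (length v) (drop (length x) w)"
  have "v' \<in> lang X"
    using take_drop_mem_lang[OF \<open>w \<in> lang X\<close>] len_w by (simp add: v'_def)
  moreover have "block_code k f v' = block_code k f v"
    using block_code_take_drop[of "length x" "length v" w k f] len_w
    by (simp add: v'_def code_w)
  ultimately have "v' = v"
    using block_code_inj[OF inj_f k_pos _ _ v(1)] len_w v(2) by (simp add: v'_def)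
  moreover have "w = take (length x) w @ v' @ drop (length v) (drop (length x) w)"
    by (simp only: v'_def append_take_drop_id)
  ultimately have "w = take (length x) w @ v @ drop (length v) (drop (length x) w)"
    by simp
  moreover have "length (take (length x) w) = length x"
    and "length (drop (length v) (drop (length x) w)) = length y"
    using len_w by simp_all
  ultimately show "\<exists>x' y'. length x' = length x \<and> length y' = length y \<and> x' @ v @ y' \<in> lang X \<and>
      block_code k f (x' @ v @ y') = x @ block_code k f v @ y"
    using \<open>w \<in> lang X\<close> code_w
    by (intro exI[of _ "take (length x) w"] exI[of _ "drop (length v) (drop (length x) w)"]) auto
next
  assume "\<exists>x' y'. length x' = length x \<and> length y' = length y \<and> x' @ v @ y' \<in> lang X \<and>
    block_code k f (x' @ v @ y') = x @ block_code k f v @ y"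
  with v(2) k_pos show "x @ block_code k f v @ y \<in> lang Y"
    by (force simp: lang_higher_block_code_iff[OF k_pos])
qed

abbreviation left_block :: "'a list \<Rightarrow> 'a \<Rightarrow> 'b" where
  "left_block v a \<equiv> f (take k (a # v))"

abbreviation right_block :: "'a list \<Rightarrow> 'a \<Rightarrow> 'b" where
  "right_block v b \<equiv> f (drop (length v + 1 - k) (v @ [b]))"

context
  fixes v assumes v: "v \<in> lang X" "k \<le> length v"
begin

lemma inj_on_left_block: "inj_on (left_block v) {a. a # v \<in> lang X}"
proof (rule inj_onI)
  fix a a' assume "a \<in> {a. a # v \<in> lang X}" "a' \<in> {a. a # v \<in> lang X}"
    and "left_block v a = left_block v a'"
  moreover have "take k (a # v) \<in> lang_k X k" "take k (a' # v) \<in> lang_k X k"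
    using calculation(1,2) v(2) by (auto intro: take_mem_lang_k)
  ultimately have "take k (a # v) = take k (a' # v)"
    using inj_onD[OF inj_f] by blast
  with k_pos show "a = a'" by (simp add: take_Cons')
qed

lemma inj_on_right_block: "inj_on (right_block v) {b. v @ [b] \<in> lang X}"
proof (rule inj_onI)
  fix b b' assume "b \<in> {b. v @ [b] \<in> lang X}" "b' \<in> {b. v @ [b] \<in> lang X}"
    and "right_block v b = right_block v b'"
  moreover have "drop (length v + 1 - k) (v @ [b]) \<in> lang_k X k"
    and "drop (length v + 1 - k) (v @ [b']) \<in> lang_k X k"
    using calculation(1,2) v(2) drop_mem_lang_k[of "v @ [_]" X k] by auto
  ultimately have "drop (length v + 1 - k) (v @ [b]) = drop (length v + 1 - k) (v @ [b'])"
    using inj_onD[OF inj_f] by blast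
  with k_pos v(2) show "b = b'" by simp
qed

lemma Cons_mem_lang_image_iff:
  "c # block_code k f v \<in> lang Y \<longleftrightarrow> (\<exists>a. a # v \<in> lang X \<and> c = left_block v a)"
  using infix_mem_lang_image_iff[OF v, of "[c]" "[]"] v(2)
  by (auto simp: ex_length_Suc_0_iff block_code_Cons)

lemma snoc_mem_lang_image_iff:
  "block_code k f v @ [d] \<in> lang Y \<longleftrightarrow> (\<exists>b. v @ [b] \<in> lang X \<and> d = right_block v b)"
  using infix_mem_lang_image_iff[OF v, of "[]" "[d]"] v(2)
  by (auto simp: ex_length_Suc_0_iff block_code_snoc)

lemma Cons_snoc_mem_lang_image_iff:
  "c # block_code k f v @ [d] \<in> lang Y \<longleftrightarrow>
    (\<exists>a b. a # v @ [b] \<in> lang X \<and> c = left_block v a \<and> d = right_block v b)"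
  using infix_mem_lang_image_iff[OF v, of "[c]" "[d]"] v(2)
  by (auto simp: ex_length_Suc_0_iff block_code_Cons_snoc)

lemma extension_mem_lang_image_iff:
  assumes "a # v \<in> lang X" "v @ [b] \<in> lang X"
  shows "left_block v a # block_code k f v @ [right_block v b] \<in> lang Y \<longleftrightarrow> a # v @ [b] \<in> lang X"
proof
  assume "left_block v a # block_code k f v @ [right_block v b] \<in> lang Y"
  then obtain a' b' where w: "a' # v @ [b'] \<in> lang X"
    and "left_block v a = left_block v a'" "right_block v b = right_block v b'"
    by (auto simp: Cons_snoc_mem_lang_image_iff)
  moreover have "a' # v \<in> lang X" "v @ [b'] \<in> lang X"
    using snoc_mem_langD[of "a' # v"] Cons_mem_langD[of a' "v @ [b']"] w by simp_all
  ultimately have "a = a'" "b = b'"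
    using inj_onD[OF inj_on_left_block] inj_onD[OF inj_on_right_block] assms by auto
  with w show "a # v @ [b] \<in> lang X" by simp
qed (auto simp: Cons_snoc_mem_lang_image_iff)

lemma ext_graph_iso:
  "graph_iso (map_sum (left_block v) (right_block v))
     (ext_vertices (lang X) v) (ext_vertices (lang Y) (block_code k f v))
     (ext_adj (lang X) v) (ext_adj (lang Y) (block_code k f v))"
  unfolding graph_iso_def
proof
  have "left_block v ` {a. a # v \<in> lang X} = {c. c # block_code k f v \<in> lang Y}"
    by (rule set_eqI) (simp add: Cons_mem_lang_image_iff image_iff)
  with inj_on_left_block
  have "bij_betw (left_block v) {a. a # v \<in> lang X} {c. c # block_code k f v \<in> lang Y}"
    by (rule bij_betw_imageI)
  moreover have "right_block v ` {b. v @ [b] \<in> lang X} = {d. block_code k f v @ [d] \<in> lang Y}"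
    by (rule set_eqI) (simp add: snoc_mem_lang_image_iff image_iff)
  with inj_on_right_block
  have "bij_betw (right_block v) {b. v @ [b] \<in> lang X} {d. block_code k f v @ [d] \<in> lang Y}"
    by (rule bij_betw_imageI)
  ultimately show "bij_betw (map_sum (left_block v) (right_block v))
      (ext_vertices (lang X) v) (ext_vertices (lang Y) (block_code k f v))"
    unfolding ext_vertices_Plus by (rule bij_betw_map_sum)
  show "\<forall>x \<in> ext_vertices (lang X) v. \<forall>y \<in> ext_vertices (lang X) v.
      ext_adj (lang Y) (block_code k f v) (map_sum (left_block v) (right_block v) x)
        (map_sum (left_block v) (right_block v) y) \<longleftrightarrow> ext_adj (lang X) v x y"
  proof (intro ballI)
    fix x y assume "x \<in> ext_vertices (lang X) v" "y \<in> ext_vertices (lang X) v"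
    then consider
        a b where "x = Inl a" "y = Inr b" "a # v \<in> lang X" "v @ [b] \<in> lang X"
      | a b where "x = Inr b" "y = Inl a" "a # v \<in> lang X" "v @ [b] \<in> lang X"
      | a a' where "x = Inl a" "y = Inl a'"
      | b b' where "x = Inr b" "y = Inr b'"
      by (auto simp: ext_vertices_def)
    then show "ext_adj (lang Y) (block_code k f v) (map_sum (left_block v) (right_block v) x)
        (map_sum (left_block v) (right_block v) y) \<longleftrightarrow> ext_adj (lang X) v x y"
      by cases (simp_all only: map_sum.simps ext_adj_simps extension_mem_lang_image_iff)
  qed
qed

lemma ext_graph_is_tree_block_code_iff:
  "ext_graph_is_tree Y (block_code k f v) \<longleftrightarrow> ext_graph_is_tree X v"
  unfolding ext_graph_is_tree_def using graph_iso_tree_iff[OF ext_graph_iso] by simp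

end

lemma eventually_dendric_image_iff: "eventually_dendric Y \<longleftrightarrow> eventually_dendric X"
proof
  assume "eventually_dendric Y"
  then obtain m where m: "\<forall>u \<in> lang Y. m \<le> length u \<longrightarrow> ext_graph_is_tree Y u"
    unfolding eventually_dendric_def by blast
  have "ext_graph_is_tree X v" if v: "v \<in> lang X" "m + k \<le> length v" for v
  proof -
    have "block_code k f v \<in> lang Y"
      using v by (auto simp: lang_higher_block_code_iff[OF k_pos])
    with m v(2) have "ext_graph_is_tree Y (block_code k f v)"
      by simp
    then show ?thesis
      using ext_graph_is_tree_block_code_iff[OF v(1)] v(2) by simp
  qed
  then show "eventually_dendric X"
    unfolding eventually_dendric_def by blast
next
  assume "eventually_dendric X"
  then obtain m where m: "\<forall>v \<in> lang X. m \<le> length v \<longrightarrow> ext_graph_is_tree X v"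
    unfolding eventually_dendric_def by blast
  have "ext_graph_is_tree Y u" if u: "u \<in> lang Y" "m + 1 \<le> length u" for u
  proof -
    obtain v where v: "v \<in> lang X" "length v = length u + k - 1" "u = block_code k f v"
      using u(1) by (auto simp: lang_higher_block_code_iff[OF k_pos])
    have "k \<le> length v" "m \<le> length v"
      using v(2) u(2) by simp_all
    with m v(1) have "ext_graph_is_tree X v"
      by blast
    then show ?thesis
      using ext_graph_is_tree_block_code_iff[OF v(1) \<open>k \<le> length v\<close>] v(3) by simp
  qed
  then show "eventually_dendric Y"
    unfolding eventually_dendric_def by blast
qed

end

theorem mainTheorem9:
  fixes A :: "'a set" and X :: "(int \<Rightarrow> 'a) set" and k :: nat
    and f :: "'a list \<Rightarrow> 'b" and Ak :: "'b set"
  assumes "shift_space A X"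
    and "k \<ge> 1"
    and "bij_betw f (lang_k X k) Ak"
  shows "eventually_dendric (higher_block_code k f ` X) \<longleftrightarrow> eventually_dendric X"
proof -
  interpret block_coding X k f
    using assms(2,3) by unfold_locales (simp_all add: bij_betw_def)
  show ?thesis
    by (rule eventually_dendric_image_iff)
qed

end
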